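(* Let $n\ge1$ be an integer and let $A_{ij}$ be the coefficient of $u^iv^jw^{n+1-i-j}$ in $P_{1/(n+1)}(u,v,w)$ (equivalently, of $x^{2i}y^{2j}z^{2(n+1-i-j)}$ in the numerator of $M_{1/(n+1)}$). Then for all integers $i,j\ge0$ with $i+j\le n+1$ and $j\le n$, $$A_{ij}=\binom{n-j}{n+1-i-j}\binom{i+j}{j},$$ with the convention $\binom{m}{k}=0$ unless $0\le k\le m$; moreover $A_{0,n+1}=1$ and $A_{i,n+1}=0$ for $i>0$.
   Context: Markov polynomials. Let $x,y,z$ be indeterminates. Consider the set consisting of all rationals $\rho\in[0,1]$, each written in lowest terms $\rho=a/b$ with integers $a\ge 0$, $b\ge 1$, together with the formal symbol $1/0$. Define Laurent polynomials $M_\rho(x,y,z)$ recursively by $M_{1/0}=y$, $M_{0/1}=x$, $M_{1/1}=\frac{x^2+y^2}{z}$, and: whenever $a/b$, $c/d$ are in this set with $|ad-bc|=1$ and $(a+2c)/(b+2d)\in[0,1]$, then $M_{\frac{a+2c}{b+2d}}=\big(M_{c/d}^2+M_{\frac{a+c}{b+d}}^2\big)/M_{a/b}$. This determines $M_\rho$ for every rational $\rho\in[0,1]$. In particular $M_{1/(k+1)}=(M_{1/k}^2+x^2)/M_{1/(k-1)}$ for $k\ge1$. Numerator. For coprime $1\le a\le b$, $P_{a/b}(u,v,w)$ denotes the homogeneous polynomial of degree $a+b-1$ such that $M_{a/b}(x,y,z)=P_{a/b}(x^2,y^2,z^2)/(x^{a-1}y^{b-1}z^{a+b-1})$; its existence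 is known. *)

theory Defs
  imports Complex_Main
begin

text \<open>Markov Laurent polynomials along the branch 1/k, evaluated at real points:
  Mk k x y z = M_{1/k}(x,y,z), with M_{1/0} = y, M_{1/1} = (x^2+y^2)/z and
  M_{1/(k+1)} = (M_{1/k}^2 + x^2) / M_{1/(k-1)}.\<close>
fun Mk :: "nat \<Rightarrow> real \<Rightarrow> real \<Rightarrow> real \<Rightarrow> real" where
  "Mk 0 x y z = y"
| "Mk (Suc 0) x y z = (x^2 + y^2) / z"
| "Mk (Suc (Suc k)) x y z = ((Mk (Suc k) x y z)^2 + x^2) / Mk k x y z"

end

theory Submission
  imports Defs
begin

(* The exchange relation M_{k+2} M_k = M_{k+1}^2 + x^2 makes
   (M_k^2 + M_{k+1}^2 + x^2) / (M_k M_{k+1}) independent of k, which gives the linear recurrence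
   M_{k+2} + M_k = t M_{k+1} with t = (x^2+y^2+z^2)/(y z).  Hence (y z)^k M_{1/k} = y P_k(x^2,y^2,z^2)
   with P_0 = 1, P_1 = u + v and P_{k+2} = (u+v+w) P_{k+1} - v w P_k.  Solving this recurrence,
   sum_k P_k t^k = (1 - w t) / ((1 - v t)(1 - w t) - u t) = sum_m t^m (v + u / (1 - w t))^m,
   so the coefficient of u^i v^j w^a in P_{i+j+a} is C(i+j, i) C(i+a-1, a).  That these
   coefficients satisfy the recurrence comes down to Pascal's rule for each of the two factors. *)

lemma Mk_pos:
  assumes "x > 0" "y > 0" "z > 0"
  shows "Mk k x y z > 0"
  using assms by (induction k x y z rule: Mk.induct) (auto simp: add_pos_nonneg)

lemma Mk_linear_recurrence:
  assumes "x > 0" "y > 0" "z > 0"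
  shows "Mk (Suc (Suc k)) x y z + Mk k x y z = (x^2 + y^2 + z^2) / (y * z) * Mk (Suc k) x y z"
proof (induction k)
  case 0
  show ?case using assms by (simp add: field_simps power2_eq_square)
next
  case (Suc k)
  define t where "t = (x^2 + y^2 + z^2) / (y * z)"
  define a where "a = Mk k x y z"
  define b where "b = Mk (Suc k) x y z"
  define c where "c = Mk (Suc (Suc k)) x y z"
  have "a > 0" "b > 0" using Mk_pos[OF assms] by (simp_all add: a_def b_def)
  have exchange: "c * a = b^2 + x^2" using \<open>a > 0\<close> by (simp add: a_def b_def c_def)
  have IH: "c + a = t * b" using Suc by (simp add: a_def b_def c_def t_def)
  have "c^2 + x^2 = c * (c + a) - b^2" using exchange by (simp add: algebra_simps power2_eq_square)
  also have "\<dots> = b * (t * c - b)" using IH by (simp add: algebra_simps power2_eq_square)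
  finally have "Mk (Suc (Suc (Suc k))) x y z = t * c - b"
    using \<open>b > 0\<close> by (simp add: b_def c_def)
  then show ?case by (simp add: b_def c_def t_def)
qed

definition degree_triples :: "nat \<Rightarrow> (nat \<times> nat \<times> nat) set" where
  "degree_triples k = {(i, j, a). i + j + a = k}"

lemma finite_degree_triples: "finite (degree_triples k)"
proof (rule finite_subset)
  show "degree_triples k \<subseteq> {..k} \<times> {..k} \<times> {..k}" by (auto simp: degree_triples_def)
qed simp

lemma sum_degree_triples:
  "(\<Sum>(i, j, a)\<in>degree_triples k. f i j a) = (\<Sum>i\<le>k. \<Sum>j\<le>k - i. f i j (k - i - j))"
proof -
  let ?h = "\<lambda>(i, j). (i, j, k - i - j)"
  have "degree_triples k = ?h ` (SIGMA i:{..k}. {..k - i})"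
    by (auto simp: degree_triples_def image_iff)
  moreover have "inj_on ?h (SIGMA i:{..k}. {..k - i})" by (auto simp: inj_on_def)
  ultimately have "(\<Sum>(i, j, a)\<in>degree_triples k. f i j a)
      = (\<Sum>(i, j)\<in>(SIGMA i:{..k}. {..k - i}). f i j (k - i - j))"
    by (auto simp: sum.reindex intro: sum.cong)
  also have "\<dots> = (\<Sum>i\<le>k. \<Sum>j\<le>k - i. f i j (k - i - j))"
    by (rule sum.Sigma[symmetric]) auto
  finally show ?thesis .
qed

definition hom_poly :: "(nat \<Rightarrow> nat \<Rightarrow> nat \<Rightarrow> 'a) \<Rightarrow> nat \<Rightarrow> 'a \<Rightarrow> 'a \<Rightarrow> 'a \<Rightarrow> 'a::comm_semiring_1"
  where "hom_poly c k u v w = (\<Sum>(i, j, a)\<in>degree_triples k. c i j a * u^i * v^j * w^a)"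

definition coeff_shift ::
    "nat \<Rightarrow> nat \<Rightarrow> nat \<Rightarrow> (nat \<Rightarrow> nat \<Rightarrow> nat \<Rightarrow> 'a) \<Rightarrow> nat \<Rightarrow> nat \<Rightarrow> nat \<Rightarrow> 'a::zero"
  where "coeff_shift p q r c i j a =
    (if p \<le> i \<and> q \<le> j \<and> r \<le> a then c (i - p) (j - q) (a - r) else 0)"

lemma hom_poly_add:
  "hom_poly c k u v w + hom_poly d k u v w = hom_poly (\<lambda>i j a. c i j a + d i j a) k u v w"
  by (simp add: hom_poly_def sum.distrib[symmetric] case_prod_beta algebra_simps)

lemma hom_poly_cong:
  "(\<And>i j a. i + j + a = k \<Longrightarrow> c i j a = d i j a) \<Longrightarrow> hom_poly c k u v w = hom_poly d k u v w"
  unfolding hom_poly_def by (rule sum.cong) (auto simp: degree_triples_def)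

lemma hom_poly_mult_monomial:
  "u^p * v^q * w^r * hom_poly c k u v w = hom_poly (coeff_shift p q r c) (k + p + q + r) u v w"
proof -
  let ?h = "\<lambda>(i, j, a). (i + p, j + q, a + r)"
  let ?g = "\<lambda>(i, j, a). coeff_shift p q r c i j a * u^i * v^j * w^a"
  have outside: "?g t = 0" if "t \<in> degree_triples (k + p + q + r) - ?h ` degree_triples k" for t
  proof -
    obtain i j a where t: "t = (i, j, a)" by (cases t)
    have "\<not> (p \<le> i \<and> q \<le> j \<and> r \<le> a)"
    proof
      assume "p \<le> i \<and> q \<le> j \<and> r \<le> a"
      then have "t = ?h (i - p, j - q, a - r)" "(i - p, j - q, a - r) \<in> degree_triples k"
        using that t by (auto simp: degree_triples_def)
      then show False using that by blast
    qed
    then show ?thesis by (auto simp: t coeff_shift_def)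
  qed
  have "hom_poly (coeff_shift p q r c) (k + p + q + r) u v w = sum ?g (degree_triples (k + p + q + r))"
    by (simp add: hom_poly_def)
  also have "\<dots> = sum ?g (?h ` degree_triples k)"
    by (rule sum.mono_neutral_right[OF finite_degree_triples])
      (use outside in \<open>auto simp: degree_triples_def\<close>)
  also have "\<dots> = sum (?g \<circ> ?h) (degree_triples k)"
    by (rule sum.reindex) (auto simp: inj_on_def)
  also have "\<dots> = u^p * v^q * w^r * hom_poly c k u v w"
    unfolding hom_poly_def sum_distrib_left
    by (rule sum.cong) (auto simp: coeff_shift_def power_add ac_simps)
  finally show ?thesis ..
qed

definition markov_coeff :: "nat \<Rightarrow> nat \<Rightarrow> nat \<Rightarrow> 'a::comm_semiring_1" where
  "markov_coeff i j a = of_nat ((i + j) choose i) * of_nat ((i + a - 1) choose a)"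

(* For i = 0 the truncated subtraction makes the second factor (a - 1) choose a, which is 1 for
   a = 0 and 0 otherwise, as required for the expansion of (1 - w t)^0. *)

lemma markov_coeff_rec:
  assumes "i + j + a \<ge> 2"
  shows "markov_coeff i j a + coeff_shift 0 1 1 markov_coeff i j a
    = coeff_shift 1 0 0 markov_coeff i j a + coeff_shift 0 1 0 markov_coeff i j a
      + coeff_shift 0 0 1 markov_coeff i j a"
proof (cases i)
  case 0
  then show ?thesis using assms
    by (cases j; cases a) (auto simp: markov_coeff_def coeff_shift_def binomial_eq_0)
next
  case (Suc i')
  then show ?thesis
    by (cases j; cases a) (auto simp: markov_coeff_def coeff_shift_def algebra_simps)
qed

lemma hom_poly_markov_coeff_rec:
  "hom_poly markov_coeff (Suc (Suc k)) u v w + v * w * hom_poly markov_coeff k u v w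
    = (u + v + w) * hom_poly markov_coeff (Suc k) u v w"
proof -
  let ?P = "hom_poly markov_coeff"
  have "(u + v + w) * ?P (Suc k) u v w
      = u^1 * v^0 * w^0 * ?P (Suc k) u v w + u^0 * v^1 * w^0 * ?P (Suc k) u v w
        + u^0 * v^0 * w^1 * ?P (Suc k) u v w"
    by (simp add: algebra_simps)
  also have "\<dots> = hom_poly (\<lambda>i j a. coeff_shift 1 0 0 markov_coeff i j a
        + coeff_shift 0 1 0 markov_coeff i j a + coeff_shift 0 0 1 markov_coeff i j a)
      (Suc (Suc k)) u v w"
    unfolding hom_poly_mult_monomial by (simp add: hom_poly_add)
  also have "\<dots> = hom_poly (\<lambda>i j a. markov_coeff i j a + coeff_shift 0 1 1 markov_coeff i j a)
      (Suc (Suc k)) u v w"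
    by (rule hom_poly_cong) (subst markov_coeff_rec; simp)
  also have "\<dots> = ?P (Suc (Suc k)) u v w + u^0 * v^1 * w^1 * ?P k u v w"
    unfolding hom_poly_mult_monomial by (simp add: hom_poly_add)
  finally show ?thesis by (simp add: ac_simps)
qed

lemma hom_poly_markov_coeff_0: "hom_poly markov_coeff 0 u v w = 1"
proof -
  have "degree_triples 0 = {(0, 0, 0)}" by (auto simp: degree_triples_def)
  then show ?thesis by (simp add: hom_poly_def markov_coeff_def)
qed

lemma hom_poly_markov_coeff_1: "hom_poly markov_coeff (Suc 0) u v w = u + v"
proof -
  have "degree_triples (Suc 0) = {(1, 0, 0), (0, 1, 0), (0, 0, 1)}"
    by (auto simp: degree_triples_def)
  then show ?thesis by (simp add: hom_poly_def markov_coeff_def)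
qed

lemma Mk_eq_hom_poly:
  assumes "x > 0" "y > 0" "z > 0"
  shows "Mk k x y z * (y * z)^k = y * hom_poly markov_coeff k (x^2) (y^2) (z^2)"
proof (induction k rule: induct_nat_012)
  case 0
  show ?case by (simp add: hom_poly_markov_coeff_0)
next
  case 1
  show ?case using assms by (simp add: hom_poly_markov_coeff_1 field_simps power2_eq_square)
next
  case (ge2 k)
  let ?P = "\<lambda>k. hom_poly markov_coeff k (x^2) (y^2) (z^2)"
  have "y * z * (Mk (Suc (Suc k)) x y z + Mk k x y z) = (x^2 + y^2 + z^2) * Mk (Suc k) x y z"
    using Mk_linear_recurrence[OF assms, of k] assms by (simp del: Mk.simps)
  then have "Mk (Suc (Suc k)) x y z * (y * z)^Suc (Suc k)
      = (x^2 + y^2 + z^2) * (Mk (Suc k) x y z * (y * z)^Suc k) - (y * z)^2 * (Mk k x y z * (y * z)^k)"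
    by (simp only: power_Suc power2_eq_square)
      (simp add: algebra_simps flip: distrib_left del: Mk.simps)
  also have "\<dots> = y * ((x^2 + y^2 + z^2) * ?P (Suc k) - y^2 * z^2 * ?P k)"
    unfolding ge2 by (simp add: algebra_simps power2_eq_square)
  also have "\<dots> = y * ?P (Suc (Suc k))"
    using hom_poly_markov_coeff_rec[of k "x^2" "y^2" "z^2"] by (simp add: eq_diff_eq)
  finally show ?case .
qed

lemma markov_coeff_eq_binomials:
  assumes "j \<le> n" "i + j \<le> n + 1"
  shows "markov_coeff i j (n + 1 - i - j)
    = of_nat ((n - j) choose (n + 1 - i - j)) * of_nat ((i + j) choose j)"
proof -
  have "i + (n + 1 - i - j) - 1 = n - j" using assms by simp
  moreover have "(i + j) choose i = (i + j) choose j" using binomial_symmetric[of j "i + j"] by simp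
  ultimately show ?thesis by (simp add: markov_coeff_def mult.commute)
qed

theorem theorem5p2:
  fixes n :: nat
  assumes "n \<ge> 1"
  defines "A \<equiv> (\<lambda>i j. if j \<le> n then real ((n - j) choose (n + 1 - i - j)) * real ((i + j) choose j)
                          else (if i = 0 then 1 else 0))"
  shows "\<forall>x y z :: real. x > 0 \<longrightarrow> y > 0 \<longrightarrow> z > 0 \<longrightarrow>
           Mk (n + 1) x y z =
             (\<Sum>i\<le>n+1. \<Sum>j\<le>n+1-i. A i j * (x^2)^i * (y^2)^j * (z^2)^(n+1-i-j))
             / (x^0 * y^n * z^(n+1))"
proof (intro allI impI)
  fix x y z :: real
  assume pos: "x > 0" "y > 0" "z > 0"
  have coeff: "A i j = markov_coeff i j (n + 1 - i - j)" if "i + j \<le> n + 1" for i j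
  proof (cases "j \<le> n")
    case True
    then show ?thesis
      using markov_coeff_eq_binomials[OF True that, where 'a = real] by (simp add: A_def)
  next
    case False
    then have "i = 0" "j = n + 1" using that by auto
    then show ?thesis by (simp add: A_def markov_coeff_def)
  qed
  have "(\<Sum>i\<le>n+1. \<Sum>j\<le>n+1-i. A i j * (x^2)^i * (y^2)^j * (z^2)^(n+1-i-j))
      = hom_poly markov_coeff (n + 1) (x^2) (y^2) (z^2)"
    unfolding hom_poly_def sum_degree_triples by (intro sum.cong refl) (simp add: coeff)
  moreover have "Mk (n + 1) x y z * (y * z)^(n + 1)
      = y * hom_poly markov_coeff (n + 1) (x^2) (y^2) (z^2)"
    by (rule Mk_eq_hom_poly[OF pos])
  ultimately show "Mk (n + 1) x y z
      = (\<Sum>i\<le>n+1. \<Sum>j\<le>n+1-i. A i j * (x^2)^i * (y^2)^j * (z^2)^(n+1-i-j)) / (x^0 * y^n * z^(n+1))"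
    using pos by (simp add: field_simps power_mult_distrib)
qed

end
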